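(* Let $\zeta_5$ be a primitive $5$-th root of unity. (1) $\{\operatorname{Tr}(M) : M\in G_q(\zeta_5)\}=\left\{0,\ \tfrac{\sqrt5-1}{2}c,\ c,\ \tfrac{\sqrt5+1}{2}c,\ 2c : c=\pm\zeta_5^j,\ j=0,1,2,3,4\right\}$. (2) For $M_q\in G_q$, let $f(q)=\operatorname{Tr} M_q\in\mathbb{Z}[q,q^{-1}]$. Then the following are equivalent: $f(1)$ is a multiple of $5$; $f(\zeta_5)=0$; $f(q)$ is divisible by $[5]_q=q^4+q^3+q^2+q+1$.
   Context: Let $q$ be a formal parameter and let $R_q=\begin{pmatrix} q & 1\\ 0 & 1\end{pmatrix}$, $S_q=\begin{pmatrix} 0 & -q^{-1}\\ 1 & 0\end{pmatrix}\in \mathrm{GL}(2,\mathbb{Z}[q,q^{-1}])$. Let $G_q=\langle R_q,S_q\rangle$ be the group they generate. For $\zeta\in\mathbb{C}^*$, set $G_q(\zeta)=\{M_q|_{q=\zeta} : M_q\in G_q\}\subset \mathrm{GL}(2,\mathbb{C})$. *)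

theory Defs
  imports "HOL-Analysis.Analysis" "HOL-Computational_Algebra.Formal_Laurent_Series"
begin

text \<open>Laurent polynomials Z[q,q^-1] are the integer formal Laurent series with finite support;
  the formal parameter q is fls_X.\<close>

definition laurent_poly :: "int fls \<Rightarrow> bool" where
  "laurent_poly f \<longleftrightarrow> finite {k. fls_nth f k \<noteq> 0}"

definition laurent_eval :: "complex \<Rightarrow> int fls \<Rightarrow> complex" where
  "laurent_eval z f = (\<Sum>k\<in>{k. fls_nth f k \<noteq> 0}. of_int (fls_nth f k) * z powi k)"

definition Rq :: "int fls^2^2" where
  "Rq = vector [vector [fls_X, 1], vector [0, 1]]"

definition Sq :: "int fls^2^2" where
  "Sq = vector [vector [0, - fls_X_inv], vector [1, 0]]"

definition Rq_inv :: "int fls^2^2" where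
  "Rq_inv = vector [vector [fls_X_inv, - fls_X_inv], vector [0, 1]]"

definition Sq_inv :: "int fls^2^2" where
  "Sq_inv = vector [vector [0, 1], vector [- fls_X, 0]]"

inductive_set Gq :: "(int fls^2^2) set" where
  one: "mat 1 \<in> Gq"
| mulR: "M \<in> Gq \<Longrightarrow> M ** Rq \<in> Gq"
| mulS: "M \<in> Gq \<Longrightarrow> M ** Sq \<in> Gq"
| mulRi: "M \<in> Gq \<Longrightarrow> M ** Rq_inv \<in> Gq"
| mulSi: "M \<in> Gq \<Longrightarrow> M ** Sq_inv \<in> Gq"

definition eval_mat :: "complex \<Rightarrow> int fls^2^2 \<Rightarrow> complex^2^2" where
  "eval_mat z M = (\<chi> i j. laurent_eval z (M $ i $ j))"

definition Gq_at :: "complex \<Rightarrow> (complex^2^2) set" where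
  "Gq_at z = eval_mat z ` Gq"

definition qint5 :: "int fls" where
  "qint5 = fls_X^4 + fls_X^3 + fls_X^2 + fls_X + 1"

definition laurent_dvd :: "int fls \<Rightarrow> int fls \<Rightarrow> bool" where
  "laurent_dvd d f \<longleftrightarrow> (\<exists>g. laurent_poly g \<and> f = d * g)"

end

theory Submission
  imports Defs
begin

text \<open>
  Evaluation at \<open>q = \<zeta>\<close> is a ring homomorphism on Laurent polynomials, so \<open>G\<^sub>q(\<zeta>)\<close> is
  generated by the images \<open>R, S\<close> of \<open>R\<^sub>q, S\<^sub>q\<close>, and there \<open>R\<^sup>5 = 1\<close> and \<open>S\<^sup>2 = -\<zeta>\<^sup>4\<close> is a
  scalar whose powers are the ten units \<open>\<plusminus>\<zeta>\<^sup>j\<close>. An explicit list of 60 matrices over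
  \<open>\<int>[\<zeta>]\<close> is closed, up to these units, under right multiplication by \<open>R\<close> and \<open>S\<close>; hence every
  element of \<open>G\<^sub>q(\<zeta>)\<close> is a unit times one of them, and their traces are
  \<open>0, s, 1, s + 1, 2\<close> with \<open>s = \<zeta> + \<zeta>\<^sup>4 = (-1 \<plusminus> \<surd>5)/2\<close>. Multiplying by \<open>S\<^sup>2\<close> shows that
  all unit multiples of these traces occur. Arithmetic in \<open>\<int>[\<zeta>]\<close> is done in coordinates with
  respect to \<open>1, \<zeta>, \<zeta>\<^sup>2, \<zeta>\<^sup>3\<close>, a basis because \<open>s\<close> is irrational and \<open>\<zeta>\<close> is not real.

  For (2), let \<open>b\<^sub>r\<close> be the sum of the coefficients of \<open>f\<close> in degrees \<open>\<equiv> r (mod 5)\<close>. Then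
  \<open>f(1) = \<Sum> b\<^sub>r\<close> and \<open>f(\<zeta>)\<close> has coordinates \<open>b\<^sub>r - b\<^sub>4\<close>, so \<open>f(\<zeta>) = 0\<close> iff all \<open>b\<^sub>r\<close> agree,
  which is exactly divisibility by \<open>[5]\<^sub>q\<close>. Since \<open>f(1)\<close> is congruent mod 5 to the sum of the
  coordinates of \<open>f(\<zeta>)\<close>, checking the finitely many possible traces shows that \<open>5 | f(1)\<close>
  exactly when the trace vanishes at \<open>\<zeta>\<close>.
\<close>

section \<open>Evaluation of Laurent polynomials\<close>

lemma laurent_eval_eq_sum_superset:
  assumes "finite A" "{k. fls_nth f k \<noteq> 0} \<subseteq> A"
  shows "laurent_eval z f = (\<Sum>k\<in>A. of_int (fls_nth f k) * z powi k)"
  unfolding laurent_eval_def by (rule sum.mono_neutral_left) (use assms in auto)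

lemma laurent_poly_add: "laurent_poly f \<Longrightarrow> laurent_poly g \<Longrightarrow> laurent_poly (f + g)"
  unfolding laurent_poly_def
  by (rule finite_subset[of _ "{k. fls_nth f k \<noteq> 0} \<union> {k. fls_nth g k \<noteq> 0}"]) auto

lemma laurent_eval_add:
  assumes f: "laurent_poly f" and g: "laurent_poly g"
  shows "laurent_eval z (f + g) = laurent_eval z f + laurent_eval z g"
proof -
  let ?A = "{k. fls_nth f k \<noteq> 0} \<union> {k. fls_nth g k \<noteq> 0}"
  have "finite ?A" using f g unfolding laurent_poly_def by simp
  then show ?thesis
    by (simp add: laurent_eval_eq_sum_superset[of ?A] subset_iff sum.distrib distrib_right)
qed

lemma laurent_poly_uminus: "laurent_poly f \<Longrightarrow> laurent_poly (- f)"
  by (simp add: laurent_poly_def)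

lemma laurent_eval_uminus: "laurent_eval z (- f) = - laurent_eval z f"
  by (simp add: laurent_eval_def sum_negf)

lemma laurent_poly_const: "laurent_poly (fls_const c)"
  unfolding laurent_poly_def by (rule finite_subset[of _ "{0}"]) auto

lemma laurent_eval_const: "laurent_eval z (fls_const c) = of_int c"
  by (simp add: laurent_eval_eq_sum_superset[of "{0}"] subset_iff)

lemma laurent_poly_0 [simp]: "laurent_poly 0"
  and laurent_poly_1 [simp]: "laurent_poly 1"
  and laurent_eval_0 [simp]: "laurent_eval z 0 = 0"
  and laurent_eval_1 [simp]: "laurent_eval z 1 = 1"
  using laurent_poly_const[of 0] laurent_poly_const[of 1]
    laurent_eval_const[of z 0] laurent_eval_const[of z 1] by simp_all

lemma laurent_support_shift:
  "{k. fls_nth (fls_shift m f) k \<noteq> 0} = (\<lambda>k. k - m) ` {k. fls_nth f k \<noteq> 0}"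
  by (auto simp: image_iff) (metis add_diff_cancel_right')

lemma laurent_poly_shift: "laurent_poly f \<Longrightarrow> laurent_poly (fls_shift m f)"
  unfolding laurent_poly_def laurent_support_shift by simp

lemma laurent_eval_shift:
  assumes "laurent_poly f" "z \<noteq> 0"
  shows "laurent_eval z (fls_shift m f) = z powi (- m) * laurent_eval z f"
proof -
  have "laurent_eval z (fls_shift m f) = (\<Sum>k | fls_nth f k \<noteq> 0. of_int (fls_nth f k) * z powi (k - m))"
    unfolding laurent_eval_def laurent_support_shift by (subst sum.reindex) (auto simp: inj_on_def)
  also have "\<dots> = z powi (- m) * laurent_eval z f"
    unfolding laurent_eval_def sum_distrib_left
    using assms(2) by (intro sum.cong) (auto simp: power_int_diff power_int_minus field_simps)
  finally show ?thesis .
qed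

lemma laurent_poly_mult_const: "laurent_poly f \<Longrightarrow> laurent_poly (f * fls_const c)"
  unfolding laurent_poly_def by (rule finite_subset[of _ "{k. fls_nth f k \<noteq> 0}"]) auto

lemma laurent_eval_mult_const:
  assumes "laurent_poly f"
  shows "laurent_eval z (f * fls_const c) = laurent_eval z f * of_int c"
  using assms unfolding laurent_poly_def
  by (subst laurent_eval_eq_sum_superset[of "{k. fls_nth f k \<noteq> 0}"])
     (auto simp: laurent_eval_def sum_distrib_left sum_distrib_right mult_ac)

lemma laurent_poly_sum:
  "finite A \<Longrightarrow> (\<And>a. a \<in> A \<Longrightarrow> laurent_poly (f a)) \<Longrightarrow> laurent_poly (\<Sum>a\<in>A. f a)"
  by (induction A rule: finite_induct) (simp_all add: laurent_poly_add)

lemma laurent_eval_sum: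
  "finite A \<Longrightarrow> (\<And>a. a \<in> A \<Longrightarrow> laurent_poly (f a)) \<Longrightarrow>
     laurent_eval z (\<Sum>a\<in>A. f a) = (\<Sum>a\<in>A. laurent_eval z (f a))"
  by (induction A rule: finite_induct)
     (simp_all add: laurent_eval_add laurent_poly_sum)

lemma laurent_poly_monomial_expansion:
  assumes "laurent_poly g"
  shows "g = (\<Sum>k | fls_nth g k \<noteq> 0. fls_shift (- k) (fls_const (fls_nth g k)))"
proof (rule fls_eqI)
  fix n
  have "(\<Sum>k | fls_nth g k \<noteq> 0. fls_nth (fls_shift (- k) (fls_const (fls_nth g k))) n)
      = (\<Sum>k | fls_nth g k \<noteq> 0. if k = n then fls_nth g k else 0)"
    by (intro sum.cong) auto
  also have "\<dots> = fls_nth g n"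
    using assms unfolding laurent_poly_def by (simp add: sum.delta')
  finally show "fls_nth g n = fls_nth (\<Sum>k | fls_nth g k \<noteq> 0. fls_shift (- k) (fls_const (fls_nth g k))) n"
    by (simp add: fls_nth_sum)
qed

lemma laurent_poly_mult_eq_sum_shift:
  assumes "laurent_poly g"
  shows "f * g = (\<Sum>k | fls_nth g k \<noteq> 0. fls_shift (- k) (f * fls_const (fls_nth g k)))"
  by (subst laurent_poly_monomial_expansion[OF assms])
     (simp add: sum_distrib_left fls_shifted_times_simps)

lemma laurent_poly_mult:
  assumes f: "laurent_poly f" and g: "laurent_poly g"
  shows "laurent_poly (f * g)"
proof -
  have "finite {k. fls_nth g k \<noteq> 0}" using g by (simp add: laurent_poly_def)
  then show ?thesis
    unfolding laurent_poly_mult_eq_sum_shift[OF g]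
    by (intro laurent_poly_sum) (simp_all add: f laurent_poly_shift laurent_poly_mult_const)
qed

lemma laurent_eval_mult:
  assumes f: "laurent_poly f" and g: "laurent_poly g" and z: "z \<noteq> 0"
  shows "laurent_eval z (f * g) = laurent_eval z f * laurent_eval z g"
proof -
  have "finite {k. fls_nth g k \<noteq> 0}" using g by (simp add: laurent_poly_def)
  then have "laurent_eval z (f * g) =
      (\<Sum>k | fls_nth g k \<noteq> 0. z powi k * (laurent_eval z f * of_int (fls_nth g k)))"
    unfolding laurent_poly_mult_eq_sum_shift[OF g] using f z
    by (simp add: laurent_eval_sum laurent_poly_shift laurent_eval_shift
        laurent_poly_mult_const laurent_eval_mult_const)
  also have "\<dots> = laurent_eval z f * laurent_eval z g"
    by (simp add: laurent_eval_def sum_distrib_left mult_ac)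
  finally show ?thesis .
qed

lemma laurent_poly_power: "laurent_poly f \<Longrightarrow> laurent_poly (f ^ n)"
  by (induction n) (simp_all add: laurent_poly_mult)

lemma laurent_eval_power: "laurent_poly f \<Longrightarrow> z \<noteq> 0 \<Longrightarrow> laurent_eval z (f ^ n) = laurent_eval z f ^ n"
  by (induction n) (simp_all add: laurent_poly_power laurent_eval_mult)

lemma laurent_poly_X: "laurent_poly fls_X"
  by (simp add: fls_X_conv_shift_1 laurent_poly_shift)

lemma laurent_eval_X: "z \<noteq> 0 \<Longrightarrow> laurent_eval z fls_X = z"
  by (simp add: fls_X_conv_shift_1 laurent_eval_shift)

lemma laurent_poly_X_inv: "laurent_poly fls_X_inv"
  by (simp add: fls_X_inv_conv_shift_1 laurent_poly_shift)

lemma laurent_eval_X_inv: "z \<noteq> 0 \<Longrightarrow> laurent_eval z fls_X_inv = inverse z"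
  by (simp add: fls_X_inv_conv_shift_1 laurent_eval_shift power_int_minus)

lemma mat_mult_nth: "(mat c ** A) $ i $ j = c * A $ i $ j"
  by (simp add: matrix_matrix_mult_def mat_def if_distrib[of "\<lambda>x. x * _"] cong: if_cong)

lemma mult_mat_nth: "(A ** mat c) $ i $ j = A $ i $ j * (c :: 'a :: semiring_1)"
  by (simp add: matrix_matrix_mult_def mat_def if_distrib[of "\<lambda>x. _ * x"] cong: if_cong)

lemma mult_mat_commute: "A ** mat c = mat c ** (A :: 'a :: comm_semiring_1^'n^'n)"
  by (simp add: vec_eq_iff mat_mult_nth mult_mat_nth mult.commute)

lemma mat_mult_mat: "mat c ** mat d = mat (c * d :: 'a :: semiring_1)"
  by (simp add: vec_eq_iff mat_mult_nth) (simp add: mat_def)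

lemma trace_mat_mult: "trace (mat c ** A) = c * trace A"
  by (simp add: trace_def mat_mult_nth sum_distrib_left)

definition laurent_mat :: "int fls^2^2 \<Rightarrow> bool" where
  "laurent_mat M \<longleftrightarrow> (\<forall>i j. laurent_poly (M $ i $ j))"

lemma laurent_mat_mult: "laurent_mat A \<Longrightarrow> laurent_mat B \<Longrightarrow> laurent_mat (A ** B)"
  by (simp add: laurent_mat_def matrix_matrix_mult_def laurent_poly_sum laurent_poly_mult)

lemma eval_mat_mult:
  assumes "laurent_mat A" "laurent_mat B" "z \<noteq> 0"
  shows "eval_mat z (A ** B) = eval_mat z A ** eval_mat z B"
  using assms
  by (simp add: laurent_mat_def eval_mat_def matrix_matrix_mult_def vec_eq_iff
      laurent_eval_sum laurent_poly_mult laurent_eval_mult)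

lemma laurent_poly_trace: "laurent_mat M \<Longrightarrow> laurent_poly (trace M)"
  by (simp add: laurent_mat_def trace_def laurent_poly_sum)

lemma laurent_eval_trace: "laurent_mat M \<Longrightarrow> laurent_eval z (trace M) = trace (eval_mat z M)"
  by (simp add: laurent_mat_def trace_def eval_mat_def laurent_eval_sum)

lemma laurent_mat_generators:
  "laurent_mat (mat 1)" "laurent_mat Rq" "laurent_mat Sq" "laurent_mat Rq_inv" "laurent_mat Sq_inv"
  by (simp_all add: laurent_mat_def mat_def Rq_def Sq_def Rq_inv_def Sq_inv_def forall_2
      laurent_poly_X laurent_poly_X_inv laurent_poly_uminus)

lemma laurent_mat_Gq: "M \<in> Gq \<Longrightarrow> laurent_mat M"
  by (induction rule: Gq.induct) (simp_all add: laurent_mat_generators laurent_mat_mult)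

lemma eval_mat_generators:
  assumes "z \<noteq> 0"
  shows "eval_mat z (mat 1) = mat 1"
    and "eval_mat z Rq = vector [vector [z, 1], vector [0, 1]]"
    and "eval_mat z Sq = vector [vector [0, - inverse z], vector [1, 0]]"
    and "eval_mat z Rq_inv = vector [vector [inverse z, - inverse z], vector [0, 1]]"
    and "eval_mat z Sq_inv = vector [vector [0, 1], vector [- z, 0]]"
  using assms
  by (simp_all add: eval_mat_def mat_def Rq_def Sq_def Rq_inv_def Sq_inv_def vec_eq_iff forall_2
      laurent_eval_uminus laurent_eval_X laurent_eval_X_inv)

lemma eval_mat_Sq_inv_eq_scalar_mult: "z \<noteq> 0 \<Longrightarrow> eval_mat z Sq_inv = mat (- z) ** eval_mat z Sq"
  by (simp add: eval_mat_generators matrix_matrix_mult_def vec_eq_iff forall_2 sum_2 mat_def)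

lemma eval_mat_Sq_squared: "z \<noteq> 0 \<Longrightarrow> eval_mat z Sq ** eval_mat z Sq = mat (- inverse z)"
  by (simp add: eval_mat_generators matrix_matrix_mult_def vec_eq_iff forall_2 sum_2 mat_def)

lemma Gq_at_mult_scalar:
  assumes z: "z \<noteq> 0" and A: "A \<in> Gq_at z"
  shows "mat (- inverse z) ** A \<in> Gq_at z"
proof -
  obtain M where M: "M \<in> Gq" and A_eq: "A = eval_mat z M"
    using A by (auto simp: Gq_at_def)
  have "eval_mat z (M ** Sq ** Sq) = A ** (eval_mat z Sq ** eval_mat z Sq)"
    using M z unfolding A_eq
    by (simp add: eval_mat_mult laurent_mat_Gq laurent_mat_generators laurent_mat_mult matrix_mul_assoc)
  also have "\<dots> = mat (- inverse z) ** A"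
    using z by (simp add: eval_mat_Sq_squared mult_mat_commute)
  finally show ?thesis
    using M unfolding Gq_at_def by (metis Gq.mulS image_eqI)
qed

lemma Gq_at_mult_scalar_power:
  assumes "z \<noteq> 0" "A \<in> Gq_at z"
  shows "mat ((- inverse z) ^ k) ** A \<in> Gq_at z"
proof (induction k)
  case 0
  show ?case using assms(2) by simp
next
  case (Suc k)
  then show ?case
    using Gq_at_mult_scalar[OF assms(1) Suc] by (simp add: matrix_mul_assoc mat_mult_mat)
qed

section \<open>Coordinates in \<open>\<int>[\<zeta>]\<close>\<close>

lemma int_golden_form_eq_0:
  fixes a b :: int
  assumes "a^2 - a * b - b^2 = 0"
  shows "a = 0 \<and> b = 0"
proof (rule ccontr)
  assume nonzero: "\<not> (a = 0 \<and> b = 0)"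
  define g where "g = gcd a b"
  have "g \<noteq> 0" using nonzero by (simp add: g_def)
  then obtain a' b' where ab: "a = a' * g" "b = b' * g" and "coprime a' b'"
    using gcd_coprime_exists unfolding g_def by blast
  have "g^2 * (a'^2 - a' * b' - b'^2) = 0"
    using assms unfolding ab by (simp add: algebra_simps power2_eq_square)
  then have "a'^2 - a' * b' - b'^2 = 0" using \<open>g \<noteq> 0\<close> by simp
  moreover have "\<not> (even a' \<and> even b')"
    using \<open>coprime a' b'\<close> by (auto simp: coprime_def)
  then have "odd (a'^2 - a' * b' - b'^2)"
    by (cases "even a'"; cases "even b'") (simp_all add: power2_eq_square)
  ultimately show False by simp
qed

type_synonym cyc5 = "int \<times> int \<times> int \<times> int"

fun cyc5_val :: "complex \<Rightarrow> cyc5 \<Rightarrow> complex" where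
  "cyc5_val z (a, b, c, d) = of_int a + of_int b * z + of_int c * z^2 + of_int d * z^3"

fun cyc5_add :: "cyc5 \<Rightarrow> cyc5 \<Rightarrow> cyc5" where
  "cyc5_add (a0, a1, a2, a3) (b0, b1, b2, b3) = (a0 + b0, a1 + b1, a2 + b2, a3 + b3)"

text \<open>The product of \<open>a\<^sub>0 + a\<^sub>1\<zeta> + a\<^sub>2\<zeta>\<^sup>2 + a\<^sub>3\<zeta>\<^sup>3\<close> and \<open>b\<^sub>0 + \<dots> + b\<^sub>3\<zeta>\<^sup>3\<close>, with the terms in
  \<open>\<zeta>\<^sup>4, \<zeta>\<^sup>5, \<zeta>\<^sup>6\<close> reduced by \<open>\<zeta>\<^sup>4 = -1 - \<zeta> - \<zeta>\<^sup>2 - \<zeta>\<^sup>3\<close>, \<open>\<zeta>\<^sup>5 = 1\<close>, \<open>\<zeta>\<^sup>6 = \<zeta>\<close>.\<close>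

fun cyc5_mul :: "cyc5 \<Rightarrow> cyc5 \<Rightarrow> cyc5" where
  "cyc5_mul (a0, a1, a2, a3) (b0, b1, b2, b3) =
    (a0*b0 - (a1*b3 + a2*b2 + a3*b1) + (a2*b3 + a3*b2),
     a0*b1 + a1*b0 - (a1*b3 + a2*b2 + a3*b1) + a3*b3,
     a0*b2 + a1*b1 + a2*b0 - (a1*b3 + a2*b2 + a3*b1),
     a0*b3 + a1*b2 + a2*b1 + a3*b0 - (a1*b3 + a2*b2 + a3*b1))"

fun cyc5_coeff_sum :: "cyc5 \<Rightarrow> int" where
  "cyc5_coeff_sum (a, b, c, d) = a + b + c + d"

type_synonym cyc5_mat = "cyc5 \<times> cyc5 \<times> cyc5 \<times> cyc5"

fun cyc5_mat_val :: "complex \<Rightarrow> cyc5_mat \<Rightarrow> complex^2^2" where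
  "cyc5_mat_val z (a, b, c, d) =
     vector [vector [cyc5_val z a, cyc5_val z b], vector [cyc5_val z c, cyc5_val z d]]"

fun cyc5_mat_mult :: "cyc5_mat \<Rightarrow> cyc5_mat \<Rightarrow> cyc5_mat" where
  "cyc5_mat_mult (a, b, c, d) (a', b', c', d') =
    (cyc5_add (cyc5_mul a a') (cyc5_mul b c'), cyc5_add (cyc5_mul a b') (cyc5_mul b d'),
     cyc5_add (cyc5_mul c a') (cyc5_mul d c'), cyc5_add (cyc5_mul c b') (cyc5_mul d d'))"

fun cyc5_mat_smult :: "cyc5 \<Rightarrow> cyc5_mat \<Rightarrow> cyc5_mat" where
  "cyc5_mat_smult x (a, b, c, d) = (cyc5_mul x a, cyc5_mul x b, cyc5_mul x c, cyc5_mul x d)"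

fun cyc5_mat_trace :: "cyc5_mat \<Rightarrow> cyc5" where
  "cyc5_mat_trace (a, b, c, d) = cyc5_add a d"

lemma cyc5_val_add: "cyc5_val z (cyc5_add x y) = cyc5_val z x + cyc5_val z y"
  by (cases x; cases y) (simp add: algebra_simps)

lemma cyc5_mat_val_trace: "trace (cyc5_mat_val z N) = cyc5_val z (cyc5_mat_trace N)"
  by (cases N) (simp add: trace_def sum_2 cyc5_val_add del: cyc5_val.simps)

locale cyclotomic5 =
  fixes \<zeta> :: complex
  assumes cyclotomic: "\<zeta>^4 + \<zeta>^3 + \<zeta>^2 + \<zeta> + 1 = 0"
begin

lemma pow4: "\<zeta>^4 = - 1 - \<zeta> - \<zeta>^2 - \<zeta>^3"
proof -
  have "\<zeta>^4 = (\<zeta>^4 + \<zeta>^3 + \<zeta>^2 + \<zeta> + 1) - 1 - \<zeta> - \<zeta>^2 - \<zeta>^3"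
    by (simp add: algebra_simps)
  then show ?thesis using cyclotomic by simp
qed

lemma pow5: "\<zeta>^5 = 1"
proof -
  have "\<zeta>^5 - 1 = (\<zeta> - 1) * (\<zeta>^4 + \<zeta>^3 + \<zeta>^2 + \<zeta> + 1)"
    by (simp add: algebra_simps eval_nat_numeral)
  then show ?thesis using cyclotomic by simp
qed

lemma nonzero: "\<zeta> \<noteq> 0"
  using pow5 by auto

lemma inverse_eq: "inverse \<zeta> = \<zeta>^4"
  by (rule inverse_unique) (simp add: pow5 flip: power_Suc)

lemma cyc5_val_mul: "cyc5_val \<zeta> (cyc5_mul x y) = cyc5_val \<zeta> x * cyc5_val \<zeta> y"
proof -
  obtain a0 a1 a2 a3 b0 b1 b2 b3 where xy: "x = (a0, a1, a2, a3)" "y = (b0, b1, b2, b3)"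
    by (cases x; cases y) auto
  have pow6: "\<zeta>^6 = \<zeta>" using pow5 by (simp add: eval_nat_numeral)
  have "cyc5_val \<zeta> x * cyc5_val \<zeta> y =
      of_int (a0*b0) + of_int (a0*b1 + a1*b0) * \<zeta> + of_int (a0*b2 + a1*b1 + a2*b0) * \<zeta>^2
      + of_int (a0*b3 + a1*b2 + a2*b1 + a3*b0) * \<zeta>^3 + of_int (a1*b3 + a2*b2 + a3*b1) * \<zeta>^4
      + of_int (a2*b3 + a3*b2) * \<zeta>^5 + of_int (a3*b3) * \<zeta>^6"
    unfolding xy by (simp add: algebra_simps eval_nat_numeral)
  also have "\<dots> = cyc5_val \<zeta> (cyc5_mul x y)"
    unfolding xy pow4 pow5 pow6 by (simp add: algebra_simps)
  finally show ?thesis ..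
qed

lemma cyc5_mat_val_mult:
  "cyc5_mat_val \<zeta> (cyc5_mat_mult M N) = cyc5_mat_val \<zeta> M ** cyc5_mat_val \<zeta> N"
  by (cases M; cases N)
     (simp add: vec_eq_iff forall_2 sum_2 matrix_matrix_mult_def cyc5_val_add cyc5_val_mul
       del: cyc5_val.simps cyc5_mul.simps cyc5_add.simps)

lemma cyc5_mat_val_smult:
  "cyc5_mat_val \<zeta> (cyc5_mat_smult x N) = mat (cyc5_val \<zeta> x) ** cyc5_mat_val \<zeta> N"
  by (cases N) (simp add: vec_eq_iff forall_2 mat_mult_nth cyc5_val_mul del: cyc5_val.simps cyc5_mul.simps)

definition s :: complex where
  "s = \<zeta> + \<zeta>^4"

lemma s_quadratic: "s^2 + s - 1 = 0"
proof -
  have "s^2 + s - 1 = (\<zeta>^4 + \<zeta>^3 + \<zeta>^2 + \<zeta> + 1) + (\<zeta>^3 + 2) * (\<zeta>^5 - 1)"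
    by (simp add: s_def algebra_simps eval_nat_numeral)
  then show ?thesis using cyclotomic pow5 by simp
qed

lemma s_cases: "s = (of_real (sqrt 5) - 1) / 2 \<or> s = - (of_real (sqrt 5) + 1) / 2"
proof -
  define t where "t = 2 * s + 1"
  have "t^2 = 4 * (s^2 + s - 1) + 5"
    by (simp add: t_def algebra_simps power2_eq_square)
  also have "\<dots> = (of_real (sqrt 5))^2"
    by (simp add: s_quadratic flip: of_real_power)
  finally have "t = of_real (sqrt 5) \<or> t = - of_real (sqrt 5)"
    by (simp add: power2_eq_iff)
  moreover have s_t: "s = (t - 1) / 2" by (simp add: t_def)
  ultimately show ?thesis
  proof (elim disjE)
    assume "t = of_real (sqrt 5)"
    then show ?thesis unfolding s_t by simp
  next
    assume "t = - of_real (sqrt 5)"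
    then have "s = (- of_real (sqrt 5) - 1) / 2" unfolding s_t by simp
    also have "\<dots> = - (of_real (sqrt 5) + 1) / 2" by (simp add: field_simps)
    finally show ?thesis ..
  qed
qed

lemma s_real: "s \<in> \<real>"
proof -
  have "s = of_real ((sqrt 5 - 1) / 2) \<or> s = of_real (- (sqrt 5 + 1) / 2)"
    using s_cases by simp
  then show ?thesis by (metis Reals_of_real)
qed

lemma not_real: "\<zeta> \<notin> \<real>"
proof
  assume "\<zeta> \<in> \<real>"
  then obtain r where r: "\<zeta> = of_real r" by (auto elim: Reals_cases)
  have "of_real (r^4 + r^3 + r^2 + r + 1) = (0 :: complex)"
    using cyclotomic unfolding r by simp
  then have "r^4 + r^3 + r^2 + r + 1 = 0" by (simp only: of_real_eq_0_iff)
  moreover have "4 * (r^4 + r^3 + r^2 + r + 1) = (2 * r^2 + r)^2 + ((r + 2)^2 + r^2) + r^2"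
    by (simp add: algebra_simps power2_eq_square eval_nat_numeral)
  moreover have "(r + 2)^2 + r^2 > 0"
    by (subst sum_power2_gt_zero_iff) auto
  ultimately show False
    by (smt (verit) zero_le_power2)
qed

lemma int_lin_indep_s:
  assumes "of_int a + of_int b * s = 0"
  shows "a = 0 \<and> b = 0"
proof (cases "b = 0")
  case True
  then show ?thesis using assms by simp
next
  case False
  have "of_int b * s = - of_int a"
    using assms by (simp add: eq_neg_iff_add_eq_0 add.commute)
  then have s_eq: "s = - of_int a / of_int b" using False by (simp add: field_simps)
  have "of_int (a^2 - a * b - b^2) = (of_int b)^2 * (s^2 + s - 1 :: complex)"
    using False unfolding s_eq by (simp add: field_simps power2_eq_square)
  then have "a^2 - a * b - b^2 = 0" using s_quadratic by (simp only: of_int_eq_0_iff mult_zero_right)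
  then show ?thesis using int_golden_form_eq_0 False by blast
qed

lemma cyc5_val_eq_0_iff: "cyc5_val \<zeta> x = 0 \<longleftrightarrow> x = (0, 0, 0, 0)"
proof
  assume val: "cyc5_val \<zeta> x = 0"
  obtain a b c d where x: "x = (a, b, c, d)" by (cases x) auto
  have "s * \<zeta> = \<zeta>^2 + \<zeta>^5"
    by (simp add: s_def algebra_simps eval_nat_numeral)
  then have pow2: "\<zeta>^2 = s * \<zeta> - 1" by (simp add: pow5)
  have "- s * \<zeta> - s = - (\<zeta>^2 + \<zeta>^5 + \<zeta> + \<zeta>^4)"
    by (simp add: s_def algebra_simps eval_nat_numeral)
  then have pow3: "\<zeta>^3 = - s * \<zeta> - s" by (simp add: pow4 pow5)
  define X where "X = of_int a - of_int c - of_int d * s"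
  define Y where "Y = of_int b + of_int (c - d) * s"
  have XY: "X + Y * \<zeta> = 0"
    using val unfolding x X_def Y_def by (simp add: pow2 pow3 algebra_simps)
  have "X \<in> \<real>" "Y \<in> \<real>" using s_real by (simp_all add: X_def Y_def)
  have "Y = 0"
  proof (rule ccontr)
    assume "Y \<noteq> 0"
    moreover have "Y * \<zeta> = - X" using XY by (simp add: eq_neg_iff_add_eq_0 add.commute)
    ultimately have "\<zeta> = - X / Y" by (simp add: field_simps)
    then show False using not_real \<open>X \<in> \<real>\<close> \<open>Y \<in> \<real>\<close> by simp
  qed
  then have "X = 0" using XY by simp
  show "x = (0, 0, 0, 0)"
    using int_lin_indep_s[of b "c - d"] int_lin_indep_s[of "a - c" "- d"] \<open>X = 0\<close> \<open>Y = 0\<close>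
    unfolding x X_def Y_def by (simp add: algebra_simps)
qed simp

lemma cyc5_val_inj: "cyc5_val \<zeta> x = cyc5_val \<zeta> y \<longleftrightarrow> x = y"
proof
  assume eq: "cyc5_val \<zeta> x = cyc5_val \<zeta> y"
  obtain a b c d a' b' c' d' where xy: "x = (a, b, c, d)" "y = (a', b', c', d')"
    by (cases x; cases y) auto
  have "cyc5_val \<zeta> (a - a', b - b', c - c', d - d') = 0"
    using eq by (simp add: xy algebra_simps)
  then have "(a - a', b - b', c - c', d - d') = (0, 0, 0, 0)"
    by (simp only: cyc5_val_eq_0_iff)
  then show "x = y" by (simp add: xy)
qed simp

end

section \<open>Residue class sums and divisibility by \<open>[5]\<^sub>q\<close>\<close>

lemma laurent_poly_qint5: "laurent_poly qint5"
  by (simp add: qint5_def laurent_poly_add laurent_poly_power laurent_poly_X)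

lemma laurent_eval_qint5: "z \<noteq> 0 \<Longrightarrow> laurent_eval z qint5 = z^4 + z^3 + z^2 + z + 1"
  by (simp add: qint5_def laurent_poly_add laurent_eval_add laurent_poly_power laurent_eval_power
      laurent_poly_X laurent_eval_X)

definition residue_coeff_sum :: "int fls \<Rightarrow> nat \<Rightarrow> int" where
  "residue_coeff_sum f r = (\<Sum>k | fls_nth f k \<noteq> 0 \<and> k mod 5 = int r. fls_nth f k)"

lemma power_int_mod5:
  fixes z :: complex
  assumes "z^5 = 1"
  shows "z powi k = z ^ nat (k mod 5)"
proof -
  have "z \<noteq> 0" using assms by auto
  have "z powi k = z powi (5 * (k div 5) + k mod 5)" by simp
  also have "\<dots> = z powi (5 * (k div 5)) * z powi (k mod 5)"
    using \<open>z \<noteq> 0\<close> by (rule power_int_add[OF disjI1])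
  also have "z powi (5 * (k div 5)) = (z powi 5) powi (k div 5)"
    by (rule power_int_mult)
  also have "\<dots> = 1"
    using assms by (simp add: power_int_def)
  finally show ?thesis by (simp add: power_int_def)
qed

lemma laurent_eval_eq_residue_coeff_sums:
  fixes z :: complex
  assumes f: "laurent_poly f" and z: "z^5 = 1"
  shows "laurent_eval z f = (\<Sum>r<5. of_int (residue_coeff_sum f r) * z^r)"
proof -
  let ?S = "{k. fls_nth f k \<noteq> 0}"
  have "laurent_eval z f = (\<Sum>k\<in>?S. of_int (fls_nth f k) * z ^ nat (k mod 5))"
    unfolding laurent_eval_def using power_int_mod5[OF z] by simp
  also have "\<dots> = (\<Sum>r<5. \<Sum>k | k \<in> ?S \<and> nat (k mod 5) = r. of_int (fls_nth f k) * z ^ nat (k mod 5))"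
    using f unfolding laurent_poly_def
    by (intro sum.group[symmetric]) (auto simp: nat_less_iff)
  also have "\<dots> = (\<Sum>r<5. of_int (residue_coeff_sum f r) * z^r)"
  proof (intro sum.cong refl)
    fix r :: nat
    have "{k. k \<in> ?S \<and> nat (k mod 5) = r} = {k. fls_nth f k \<noteq> 0 \<and> k mod 5 = int r}"
      by auto
    then show "(\<Sum>k | k \<in> ?S \<and> nat (k mod 5) = r. of_int (fls_nth f k) * z ^ nat (k mod 5))
        = of_int (residue_coeff_sum f r) * z^r"
      by (simp add: residue_coeff_sum_def sum_distrib_right)
  qed
  finally show ?thesis .
qed

lemma laurent_eval_1_eq_residue_coeff_sums:
  "laurent_poly f \<Longrightarrow> laurent_eval 1 f = of_int (\<Sum>r<5. residue_coeff_sum f r)"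
  using laurent_eval_eq_residue_coeff_sums[of f 1] by simp

lemma qint5_mult_nth: "fls_nth (qint5 * g) n = (\<Sum>i<5. fls_nth g (n - int i))"
proof -
  have "qint5 * g = fls_shift (-4) g + fls_shift (-3) g + fls_shift (-2) g + fls_shift (-1) g + g"
    by (simp add: qint5_def distrib_right fls_X_power_times_conv_shift fls_X_times_conv_shift)
  then show ?thesis by (simp add: eval_nat_numeral algebra_simps)
qed

definition residue_partial_sum :: "int fls \<Rightarrow> int \<Rightarrow> int" where
  "residue_partial_sum f n = (\<Sum>k | fls_nth f k \<noteq> 0 \<and> k \<le> n \<and> k mod 5 = n mod 5. fls_nth f k)"

lemma residue_partial_sum_step:
  assumes "laurent_poly f"
  shows "residue_partial_sum f n = residue_partial_sum f (n - 5) + fls_nth f n"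
proof -
  define S where "S = {k. fls_nth f k \<noteq> 0}"
  have "finite S" using assms by (simp add: laurent_poly_def S_def)
  have A: "residue_partial_sum f m = (\<Sum>k | k \<in> S \<and> k \<le> m \<and> k mod 5 = m mod 5. fls_nth f k)" for m
    by (simp add: residue_partial_sum_def S_def)
  have "(n - 5) mod 5 = n mod 5" by presburger
  moreover have "k = n" if "k \<le> n" "k mod 5 = n mod 5" "\<not> k \<le> n - 5" for k
    using that by presburger
  ultimately have "{k. k \<in> S \<and> k \<le> n \<and> k mod 5 = n mod 5} =
      {k. k \<in> S \<and> k \<le> n - 5 \<and> k mod 5 = (n - 5) mod 5} \<union> (S \<inter> {n})"
    by auto
  then have "residue_partial_sum f n = residue_partial_sum f (n - 5) + (\<Sum>k\<in>S \<inter> {n}. fls_nth f k)"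
    unfolding A using \<open>finite S\<close> by (subst sum.union_disjoint[symmetric]) auto
  then show ?thesis by (cases "n \<in> S") (auto simp: S_def)
qed

lemma residue_partial_sum_bounds:
  assumes "laurent_poly f"
  obtains L where "\<And>n. n < - L \<Longrightarrow> residue_partial_sum f n = 0"
    and "\<And>n. n > L \<Longrightarrow> residue_partial_sum f n = residue_coeff_sum f (nat (n mod 5))"
proof
  define S where "S = {k. fls_nth f k \<noteq> 0}"
  have "finite S" using assms by (simp add: laurent_poly_def S_def)
  define L where "L = Max (insert 0 (abs ` S))"
  have L: "\<bar>k\<bar> \<le> L" if "k \<in> S" for k
    unfolding L_def using \<open>finite S\<close> that by (intro Max_ge) auto
  show "residue_partial_sum f n = 0" if "n < - L" for n
  proof -
    have "{k. fls_nth f k \<noteq> 0 \<and> k \<le> n \<and> k mod 5 = n mod 5} = {}"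
      using L that unfolding S_def by force
    then show ?thesis unfolding residue_partial_sum_def by (simp only: sum.empty)
  qed
  show "residue_partial_sum f n = residue_coeff_sum f (nat (n mod 5))" if "n > L" for n
  proof -
    have "{k. fls_nth f k \<noteq> 0 \<and> k \<le> n \<and> k mod 5 = n mod 5} =
        {k. fls_nth f k \<noteq> 0 \<and> k mod 5 = int (nat (n mod 5))}"
      using L that unfolding S_def by force
    then show ?thesis by (simp add: residue_partial_sum_def residue_coeff_sum_def)
  qed
qed

lemma qint5_dvd_if_residue_coeff_sums_eq:
  assumes f: "laurent_poly f"
    and sums_eq: "\<And>r. r < 5 \<Longrightarrow> residue_coeff_sum f r = residue_coeff_sum f 0"
  shows "laurent_dvd qint5 f"
proof -
  define A where "A = residue_partial_sum f"
  obtain L where A_low: "\<And>n. n < - L \<Longrightarrow> A n = 0"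
    and A_mod: "\<And>n. n > L \<Longrightarrow> A n = residue_coeff_sum f (nat (n mod 5))"
    using residue_partial_sum_bounds[OF f] unfolding A_def by blast
  have A_high: "A n = residue_coeff_sum f 0" if "n > L" for n
    using A_mod[OF that] sums_eq[of "nat (n mod 5)"] by (simp add: nat_less_iff)
  \<comment> \<open>The quotient has the coefficients \<open>A n - A (n - 1)\<close>; they telescope in \<open>[5]\<^sub>q\<close> times it.\<close>
  define g where "g = Abs_fls (\<lambda>n. A n - A (n - 1))"
  have g_nth: "fls_nth g n = A n - A (n - 1)" for n
    unfolding g_def by (rule nth_Abs_fls_ex_lower_bound) (use A_low in \<open>auto intro: exI[of _ "- L"]\<close>)
  have "fls_nth g n = 0" if "n \<notin> {- L .. L + 1}" for n
  proof (cases "n < - L")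
    case True
    then show ?thesis using A_low[of n] A_low[of "n - 1"] by (simp add: g_nth)
  next
    case False
    then show ?thesis using that A_high[of n] A_high[of "n - 1"] by (simp add: g_nth)
  qed
  then have "{n. fls_nth g n \<noteq> 0} \<subseteq> {- L .. L + 1}" by blast
  then have "laurent_poly g"
    unfolding laurent_poly_def using finite_subset by blast
  moreover have "f = qint5 * g"
  proof (rule fls_eqI)
    fix n
    have "fls_nth (qint5 * g) n = (\<Sum>i<5. A (n - int i) - A (n - int i - 1))"
      by (simp add: qint5_mult_nth g_nth)
    also have "\<dots> = A n - A (n - 5)"
      by (simp add: eval_nat_numeral diff_diff_eq)
    finally show "fls_nth f n = fls_nth (qint5 * g) n"
      using residue_partial_sum_step[OF f, of n] by (simp add: A_def)
  qed
  ultimately show ?thesis by (auto simp: laurent_dvd_def)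
qed

definition residue_coords :: "int fls \<Rightarrow> cyc5" where
  "residue_coords f = (let b = residue_coeff_sum f in (b 0 - b 4, b 1 - b 4, b 2 - b 4, b 3 - b 4))"

lemma residue_coeff_sums_eq_coeff_sum_coords:
  "(\<Sum>r<5. residue_coeff_sum f r) = cyc5_coeff_sum (residue_coords f) + 5 * residue_coeff_sum f 4"
  by (simp add: lessThan_nat_numeral residue_coords_def Let_def)

context cyclotomic5
begin

lemma laurent_eval_eq_cyc5_val:
  assumes "laurent_poly f"
  shows "laurent_eval \<zeta> f = cyc5_val \<zeta> (residue_coords f)"
  using laurent_eval_eq_residue_coeff_sums[OF assms pow5]
  by (simp add: lessThan_nat_numeral residue_coords_def Let_def pow4 algebra_simps)

lemma laurent_eval_eq_0_iff_qint5_dvd: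
  assumes f: "laurent_poly f"
  shows "laurent_eval \<zeta> f = 0 \<longleftrightarrow> laurent_dvd qint5 f"
proof
  assume "laurent_eval \<zeta> f = 0"
  then have "residue_coords f = (0, 0, 0, 0)"
    using f by (simp add: laurent_eval_eq_cyc5_val cyc5_val_eq_0_iff del: cyc5_val.simps)
  then have "residue_coeff_sum f r = residue_coeff_sum f 0" if "r < 5" for r
    using that by (auto simp: residue_coords_def Let_def numeral_eq_Suc less_Suc_eq)
  then show "laurent_dvd qint5 f"
    by (rule qint5_dvd_if_residue_coeff_sums_eq[OF f])
next
  assume "laurent_dvd qint5 f"
  then obtain g where "laurent_poly g" "f = qint5 * g"
    by (auto simp: laurent_dvd_def)
  then show "laurent_eval \<zeta> f = 0"
    by (simp add: laurent_eval_mult laurent_poly_qint5 laurent_eval_qint5 nonzero cyclotomic)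
qed

end

section \<open>A finite cover of \<open>G\<^sub>q(\<zeta>)\<close>\<close>

definition unit_coords :: "cyc5 list" where
  "unit_coords =
    [(1, 0, 0, 0), (-1, 0, 0, 0), (0, 1, 0, 0), (0, -1, 0, 0), (0, 0, 1, 0),
     (0, 0, -1, 0), (0, 0, 0, 1), (0, 0, 0, -1), (-1, -1, -1, -1), (1, 1, 1, 1)]"

definition trace_coords :: "cyc5 list" where
  "trace_coords = [(0, 0, 0, 0), (-1, 0, -1, -1), (1, 0, 0, 0), (0, 0, -1, -1), (2, 0, 0, 0)]"

definition R_coords :: cyc5_mat where
  "R_coords = ((0, 1, 0, 0), (1, 0, 0, 0), (0, 0, 0, 0), (1, 0, 0, 0))"

definition S_coords :: cyc5_mat where
  "S_coords = ((0, 0, 0, 0), (1, 1, 1, 1), (1, 0, 0, 0), (0, 0, 0, 0))"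

text \<open>
  Representatives, up to the units in \<open>unit_coords\<close>, of the image of \<open>G\<^sub>q\<close> at \<open>\<zeta>\<close>,
  found by a computer search. The \<open>i\<close>-th entry of \<open>orbit_R_index\<close> is the index of the
  representative of \<open>orbit_reps ! i\<close> times \<open>R\<close>, and likewise for \<open>S\<close>; these index lists
  only guide the evaluation that checks \<open>orbit_certificate\<close>.
\<close>

definition orbit_reps :: "cyc5_mat list" where
  "orbit_reps =
    [((1, 0, 0, 0), (0, 0, 0, 0), (0, 0, 0, 0), (1, 0, 0, 0)),
     ((-1, -2, -1, -1), (0, 1, 1, 1), (-1, -1, 0, 0), (1, 2, 1, 1)),
     ((-1, -1, -2, -1), (0, 0, 1, 1), (-1, -1, -1, 0), (0, 1, 1, 0)),
     ((-1, -1, -1, -1), (0, 0, 0, 0), (-1, -1, 0, 0), (0, 1, 0, 0)),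
     ((-1, -1, -1, -1), (0, 0, 0, 1), (-1, -1, 0, 0), (1, 1, 1, 1)),
     ((-1, -1, -1, -1), (0, 0, 1, 1), (-1, 0, 0, 0), (1, 1, 1, 1)),
     ((-1, -1, -1, -1), (0, 1, 1, 1), (-1, -1, -1, -1), (1, 1, 1, 1)),
     ((-1, -1, -1, -1), (0, 1, 1, 1), (0, 0, 0, 0), (0, 1, 0, 0)),
     ((-1, -1, -1, -1), (1, 1, 1, 1), (-1, -1, -1, 0), (1, 1, 1, 1)),
     ((-1, -1, -1, -1), (1, 1, 1, 1), (-1, 0, 0, 0), (1, 1, 0, 0)),
     ((-1, -1, -1, 0), (0, 0, 1, 0), (-1, 0, 0, 1), (1, 1, 1, 0)),
     ((-1, -1, -1, 0), (0, 1, 1, 0), (-1, 0, 0, 1), (1, 1, 1, 0)),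
     ((-1, -1, -1, 0), (0, 1, 1, 0), (0, 0, 1, 1), (0, 1, 0, -1)),
     ((-1, -1, -1, 0), (0, 1, 1, 1), (-1, 0, 0, 1), (1, 1, 1, 0)),
     ((-1, -1, -1, 0), (1, 1, 1, 1), (-1, 0, 0, 1), (1, 1, 1, 0)),
     ((-1, -1, -1, 0), (1, 1, 2, 1), (-1, -1, 0, 0), (1, 1, 1, 0)),
     ((-1, -1, -1, 0), (1, 1, 2, 1), (-1, 0, 0, 0), (1, 1, 1, 0)),
     ((-1, -1, -1, 0), (1, 1, 2, 1), (-1, 0, 0, 1), (1, 1, 1, 0)),
     ((-1, -1, -1, 0), (1, 1, 2, 1), (0, 0, 0, 1), (1, 1, 1, 0)),
     ((-1, -1, -1, 0), (1, 1, 2, 1), (0, 0, 1, 1), (1, 1, 1, 0)),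
     ((-1, 0, 0, 0), (1, 1, 0, 0), (0, 1, 1, 1), (0, 0, -1, -1)),
     ((-1, 0, 0, 0), (1, 1, 1, 0), (0, 1, 1, 0), (0, 0, -1, -1)),
     ((0, -1, -1, -1), (-1, 0, 0, 0), (0, -1, 0, 0), (0, 1, 0, 0)),
     ((0, -1, -1, -1), (0, 0, 0, 1), (-1, -1, -1, 0), (1, 1, 1, 1)),
     ((0, -1, -1, -1), (0, 0, 1, 1), (-1, -1, -1, -1), (1, 1, 1, 1)),
     ((0, -1, -1, 0), (0, 0, 1, 0), (-1, -1, 0, 0), (1, 1, 1, 0)),
     ((0, -1, -1, 0), (0, 1, 1, 1), (0, 0, 0, 1), (1, 1, 1, 0)),
     ((0, -1, 0, 0), (0, 1, 0, 0), (0, 0, 1, 1), (1, 1, 0, 0)),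
     ((0, -1, 0, 0), (0, 1, 1, 0), (0, 0, 1, 0), (1, 1, 0, 0)),
     ((0, 0, -1, -1), (-1, -1, -1, 0), (0, -1, -1, 0), (-1, 0, 0, 0)),
     ((0, 0, -1, -1), (-1, -1, 0, 0), (0, -1, -1, -1), (-1, 0, 0, 0)),
     ((0, 0, -1, -1), (0, -1, 0, 0), (-1, -1, -1, -1), (0, 0, 0, 0)),
     ((0, 0, -1, -1), (0, 0, 0, 1), (0, 0, -1, 0), (0, 0, 0, 0)),
     ((0, 0, -1, 0), (0, 0, 0, 0), (0, 0, 0, 1), (0, 0, 0, -1)),
     ((0, 0, -1, 0), (0, 0, 1, 0), (0, 0, 0, 0), (0, 0, 0, -1)),
     ((0, 0, 0, -1), (0, 0, -1, 0), (0, 0, 0, 0), (0, 0, -1, 0)),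
     ((0, 0, 0, -1), (0, 0, 0, 0), (0, 0, 0, -1), (0, 0, -1, 0)),
     ((0, 0, 0, 0), (-1, -1, -1, -1), (-1, 0, 0, 0), (0, 0, 0, 0)),
     ((0, 0, 0, 0), (0, 0, 0, -1), (0, 0, 1, 0), (0, 0, -1, -1)),
     ((0, 0, 0, 0), (0, 1, 0, 0), (1, 1, 1, 1), (0, 0, -1, -1)),
     ((0, 0, 0, 0), (1, 0, 0, 0), (-1, 0, 0, 0), (1, 0, 0, 0)),
     ((0, 0, 0, 0), (1, 1, 1, 1), (0, 1, 0, 0), (1, 0, 0, 0)),
     ((0, 0, 0, 1), (1, 1, 1, 0), (0, 1, 1, 1), (1, 0, 0, -1)),
     ((0, 0, 1, 0), (1, 1, 0, 0), (0, 1, 1, 0), (1, 0, -1, 0)),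
     ((0, 1, 0, -1), (0, -1, -1, 0), (0, 0, -1, -1), (-1, -1, -1, 0)),
     ((0, 1, 0, 0), (0, -1, -1, -1), (0, 0, 0, 0), (-1, -1, -1, -1)),
     ((0, 1, 0, 0), (0, 0, 0, 0), (1, 1, 0, 0), (-1, -1, -1, -1)),
     ((0, 1, 0, 0), (1, 0, 0, 0), (0, 1, 0, 0), (0, -1, -1, -1)),
     ((0, 1, 1, 0), (0, 0, -1, -1), (1, 1, 1, 0), (-1, -1, -2, -1)),
     ((1, 0, -1, 0), (-1, -1, 0, 0), (0, -1, -1, 0), (0, 0, 1, 0)),
     ((1, 0, 0, -1), (-1, -1, -1, 0), (0, -1, -1, -1), (0, 0, 0, 1)),
     ((1, 0, 0, 0), (-1, -1, -1, -1), (0, -1, 0, 0), (0, 0, 0, 0)),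
     ((1, 0, 0, 0), (-1, 0, 0, 0), (1, 0, 0, 0), (0, 0, 0, 0)),
     ((1, 1, 0, 0), (-1, -1, -1, -1), (1, 0, 0, 0), (-1, -1, -1, -1)),
     ((1, 1, 0, 0), (0, -1, -1, 0), (0, 0, -1, 0), (0, -1, 0, 0)),
     ((1, 1, 0, 0), (0, -1, 0, 0), (0, 0, -1, -1), (0, -1, 0, 0)),
     ((1, 1, 1, 0), (0, -1, -1, -1), (0, 0, 0, -1), (0, -1, -1, 0)),
     ((1, 1, 1, 0), (0, 0, -1, 0), (1, 1, 0, 0), (0, -1, -1, 0)),
     ((1, 1, 1, 1), (0, 0, -1, -1), (1, 1, 1, 1), (0, -1, -1, -1)),
     ((1, 1, 1, 1), (0, 0, 0, -1), (1, 1, 1, 0), (0, -1, -1, -1))]"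

definition orbit_R_index :: "nat list" where
  "orbit_R_index =
    [35, 2, 49, 4, 21, 28, 52, 34, 46, 33, 13, 14, 25, 17, 10, 30, 26, 11, 24, 12,
     8, 42, 31, 29, 32, 23, 22, 3, 9, 19, 55, 54, 53, 51, 0, 45, 47, 41, 40, 38,
     37, 39, 27, 20, 1, 7, 59, 58, 15, 50, 44, 5, 36, 56, 16, 57, 18, 48, 6, 43]"

definition orbit_S_index :: "nat list" where
  "orbit_S_index =
    [37, 17, 19, 39, 9, 22, 53, 31, 47, 4, 42, 48, 13, 12, 43, 44, 49, 1, 50, 2,
     57, 25, 5, 28, 54, 21, 29, 59, 23, 26, 56, 7, 45, 41, 51, 52, 40, 0, 46, 3,
     36, 33, 10, 14, 15, 32, 38, 8, 11, 16, 18, 34, 35, 6, 24, 58, 30, 20, 55, 27]"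

definition orbit_certificate :: "cyc5_mat \<Rightarrow> nat list \<Rightarrow> bool" where
  "orbit_certificate G idx \<longleftrightarrow>
     list_all2 (\<lambda>N j. j < length orbit_reps \<and>
       (\<exists>c\<in>set unit_coords. cyc5_mat_mult N G = cyc5_mat_smult c (orbit_reps ! j)))
     orbit_reps idx"

lemma orbit_certificate_R: "orbit_certificate R_coords orbit_R_index"
  by (simp add: orbit_certificate_def orbit_reps_def orbit_R_index_def unit_coords_def R_coords_def)

lemma orbit_certificate_S: "orbit_certificate S_coords orbit_S_index"
  by (simp add: orbit_certificate_def orbit_reps_def orbit_S_index_def unit_coords_def S_coords_def)

lemma unit_coords_mult_closed:
  "c \<in> set unit_coords \<Longrightarrow> d \<in> set unit_coords \<Longrightarrow> cyc5_mul c d \<in> set unit_coords"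
  by (auto simp: unit_coords_def)

lemma orbit_reps_trace: "N \<in> set orbit_reps \<Longrightarrow> cyc5_mat_trace N \<in> set trace_coords"
  by (auto simp: orbit_reps_def trace_coords_def)

lemma trace_coords_coeff_sum_mod5:
  "c \<in> set unit_coords \<Longrightarrow> t \<in> set trace_coords \<Longrightarrow>
     5 dvd cyc5_coeff_sum (cyc5_mul c t) \<longleftrightarrow> t = (0, 0, 0, 0)"
  by (auto simp: unit_coords_def trace_coords_def)

lemma orbit_certificate_step:
  assumes "orbit_certificate G idx" "N \<in> set orbit_reps"
  shows "\<exists>c\<in>set unit_coords. \<exists>N'\<in>set orbit_reps. cyc5_mat_mult N G = cyc5_mat_smult c N'"
proof -
  obtain i where i: "i < length orbit_reps" "N = orbit_reps ! i"
    using assms(2) by (auto simp: in_set_conv_nth)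
  then show ?thesis
    using assms(1) unfolding orbit_certificate_def list_all2_conv_all_nth by (metis nth_mem)
qed

context cyclotomic5
begin

definition orbit_cover :: "(complex^2^2) set" where
  "orbit_cover = {mat (cyc5_val \<zeta> c) ** cyc5_mat_val \<zeta> N | c N. c \<in> set unit_coords \<and> N \<in> set orbit_reps}"

lemma orbit_coverI:
  "c \<in> set unit_coords \<Longrightarrow> N \<in> set orbit_reps \<Longrightarrow> mat (cyc5_val \<zeta> c) ** cyc5_mat_val \<zeta> N \<in> orbit_cover"
  unfolding orbit_cover_def by blast

lemma orbit_coverE:
  assumes "A \<in> orbit_cover"
  obtains c N
  where "A = mat (cyc5_val \<zeta> c) ** cyc5_mat_val \<zeta> N" "c \<in> set unit_coords" "N \<in> set orbit_reps"
  using assms unfolding orbit_cover_def by blast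

lemma orbit_cover_mult_scalar:
  assumes "c \<in> set unit_coords" "A \<in> orbit_cover"
  shows "mat (cyc5_val \<zeta> c) ** A \<in> orbit_cover"
proof -
  obtain d N where A: "A = mat (cyc5_val \<zeta> d) ** cyc5_mat_val \<zeta> N" "d \<in> set unit_coords" "N \<in> set orbit_reps"
    using assms(2) by (rule orbit_coverE)
  have "mat (cyc5_val \<zeta> c) ** A = mat (cyc5_val \<zeta> (cyc5_mul c d)) ** cyc5_mat_val \<zeta> N"
    by (simp add: A matrix_mul_assoc mat_mult_mat cyc5_val_mul del: cyc5_val.simps cyc5_mul.simps)
  then show ?thesis
    using orbit_coverI[OF unit_coords_mult_closed[OF assms(1) A(2)] A(3)] by simp
qed

lemma orbit_cover_mult:
  assumes "orbit_certificate G idx" "A \<in> orbit_cover"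
  shows "A ** cyc5_mat_val \<zeta> G \<in> orbit_cover"
proof -
  obtain c N where A: "A = mat (cyc5_val \<zeta> c) ** cyc5_mat_val \<zeta> N" "c \<in> set unit_coords" "N \<in> set orbit_reps"
    using assms(2) by (rule orbit_coverE)
  obtain d N' where NG: "cyc5_mat_mult N G = cyc5_mat_smult d N'" "d \<in> set unit_coords" "N' \<in> set orbit_reps"
    using orbit_certificate_step[OF assms(1) A(3)] by blast
  have "A ** cyc5_mat_val \<zeta> G = mat (cyc5_val \<zeta> c) ** cyc5_mat_val \<zeta> (cyc5_mat_mult N G)"
    by (simp add: A cyc5_mat_val_mult matrix_mul_assoc)
  also have "\<dots> = mat (cyc5_val \<zeta> c) ** (mat (cyc5_val \<zeta> d) ** cyc5_mat_val \<zeta> N')"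
    by (simp only: NG(1) cyc5_mat_val_smult)
  finally have "A ** cyc5_mat_val \<zeta> G = mat (cyc5_val \<zeta> c) ** (mat (cyc5_val \<zeta> d) ** cyc5_mat_val \<zeta> N')" .
  then show ?thesis
    using orbit_cover_mult_scalar[OF A(2) orbit_coverI[OF NG(2,3)]] by simp
qed

lemma eval_mat_Rq: "eval_mat \<zeta> Rq = cyc5_mat_val \<zeta> R_coords"
  by (simp add: eval_mat_generators nonzero R_coords_def)

lemma eval_mat_Sq: "eval_mat \<zeta> Sq = cyc5_mat_val \<zeta> S_coords"
  by (simp add: eval_mat_generators nonzero S_coords_def inverse_eq pow4 algebra_simps)

lemma eval_mat_Rq_inv:
  "eval_mat \<zeta> Rq_inv = cyc5_mat_val \<zeta> R_coords ** cyc5_mat_val \<zeta> R_coords ** cyc5_mat_val \<zeta> R_coords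
     ** cyc5_mat_val \<zeta> R_coords"
proof -
  have "eval_mat \<zeta> Rq_inv = cyc5_mat_val \<zeta> ((-1, -1, -1, -1), (1, 1, 1, 1), (0, 0, 0, 0), (1, 0, 0, 0))"
    by (simp add: eval_mat_generators nonzero inverse_eq pow4 algebra_simps)
  also have "((-1, -1, -1, -1), (1, 1, 1, 1), (0, 0, 0, 0), (1, 0, 0, 0)) =
      cyc5_mat_mult (cyc5_mat_mult (cyc5_mat_mult R_coords R_coords) R_coords) R_coords"
    by (simp add: R_coords_def)
  finally show ?thesis
    by (simp only: cyc5_mat_val_mult)
qed

lemma eval_mat_Sq_inv: "eval_mat \<zeta> Sq_inv = mat (cyc5_val \<zeta> (0, -1, 0, 0)) ** cyc5_mat_val \<zeta> S_coords"
  by (simp add: eval_mat_Sq_inv_eq_scalar_mult nonzero flip: eval_mat_Sq)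

lemma eval_mat_Gq_in_orbit_cover: "M \<in> Gq \<Longrightarrow> eval_mat \<zeta> M \<in> orbit_cover"
proof (induction rule: Gq.induct)
  case one
  have "(1, 0, 0, 0) \<in> set unit_coords" "orbit_reps ! 0 \<in> set orbit_reps"
    by (simp_all add: unit_coords_def orbit_reps_def)
  then have "mat (cyc5_val \<zeta> (1, 0, 0, 0)) ** cyc5_mat_val \<zeta> (orbit_reps ! 0) \<in> orbit_cover"
    by (rule orbit_coverI)
  moreover have "cyc5_mat_val \<zeta> (orbit_reps ! 0) = mat 1"
    by (simp add: orbit_reps_def vec_eq_iff forall_2 mat_def)
  ultimately show ?case
    by (simp add: eval_mat_generators nonzero)
next
  case (mulR M)
  then show ?case
    using orbit_cover_mult[OF orbit_certificate_R]
    by (simp add: eval_mat_mult laurent_mat_Gq laurent_mat_generators nonzero eval_mat_Rq)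
next
  case (mulS M)
  then show ?case
    using orbit_cover_mult[OF orbit_certificate_S]
    by (simp add: eval_mat_mult laurent_mat_Gq laurent_mat_generators nonzero eval_mat_Sq)
next
  case (mulRi M)
  then show ?case
    using orbit_cover_mult[OF orbit_certificate_R]
    by (simp add: eval_mat_mult laurent_mat_Gq laurent_mat_generators nonzero eval_mat_Rq_inv
        matrix_mul_assoc)
next
  case (mulSi M)
  have "(0, -1, 0, 0) \<in> set unit_coords" by (simp add: unit_coords_def)
  with mulSi show ?case
    using orbit_cover_mult[OF orbit_certificate_S] orbit_cover_mult_scalar
    by (simp add: eval_mat_mult laurent_mat_Gq laurent_mat_generators nonzero eval_mat_Sq_inv
        matrix_mul_assoc mult_mat_commute del: cyc5_val.simps)
qed

end

section \<open>Traces\<close>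

definition trace_pattern :: "'a :: ring_1 \<Rightarrow> 'a \<Rightarrow> 'a set \<Rightarrow> 'a set" where
  "trace_pattern a b U = {x. \<exists>c\<in>U. x \<in> {0, a * c, c, b * c, 2 * c}}"

lemma trace_pattern_swap:
  assumes "\<And>c. c \<in> U \<Longrightarrow> - c \<in> U"
  shows "trace_pattern a b U = trace_pattern (- b) (- a) U"
proof -
  have swap: "trace_pattern a b U \<subseteq> trace_pattern (- b) (- a) U" for a b
  proof
    fix x assume "x \<in> trace_pattern a b U"
    then obtain c where c: "c \<in> U" and x: "x \<in> {0, a * c, c, b * c, 2 * c}"
      by (auto simp: trace_pattern_def)
    have "- c \<in> U" using assms[OF c] .
    from x have "x \<in> {0, c, 2 * c} \<or> x = - a * (- c) \<or> x = - b * (- c)" by auto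
    then show "x \<in> trace_pattern (- b) (- a) U"
      unfolding trace_pattern_def using c \<open>- c \<in> U\<close> by blast
  qed
  show ?thesis
    using swap[of a b] swap[of "- b" "- a"] by simp
qed

context cyclotomic5
begin

definition signed_powers :: "complex set" where
  "signed_powers = {c. \<exists>j. c = \<zeta>^j \<or> c = - (\<zeta>^j)}"

lemma signed_powers_mult:
  assumes "a \<in> signed_powers" "b \<in> signed_powers"
  shows "a * b \<in> signed_powers"
proof -
  obtain i j where "a = \<zeta>^i \<or> a = - (\<zeta>^i)" "b = \<zeta>^j \<or> b = - (\<zeta>^j)"
    using assms by (auto simp: signed_powers_def)
  then have "a * b = \<zeta>^(i + j) \<or> a * b = - (\<zeta>^(i + j))"
    by (auto simp: power_add)
  then show ?thesis by (auto simp: signed_powers_def)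
qed

lemma signed_powers_uminus: "a \<in> signed_powers \<Longrightarrow> - a \<in> signed_powers"
  unfolding signed_powers_def by auto

lemma power_mod5: "\<zeta>^n = \<zeta>^(n mod 5)"
proof -
  have "\<zeta>^n = \<zeta>^(5 * (n div 5) + n mod 5)" by simp
  also have "\<dots> = (\<zeta>^5)^(n div 5) * \<zeta>^(n mod 5)" by (simp only: power_add power_mult)
  finally show ?thesis by (simp add: pow5)
qed

lemma signed_powers_bounded: "signed_powers = {c. \<exists>j < 5. c = \<zeta>^j \<or> c = - (\<zeta>^j)}"
proof (intro set_eqI iffI)
  fix c assume "c \<in> signed_powers"
  then obtain j where "c = \<zeta>^j \<or> c = - (\<zeta>^j)"
    unfolding signed_powers_def by blast
  then show "c \<in> {c. \<exists>j < 5. c = \<zeta>^j \<or> c = - (\<zeta>^j)}"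
    using power_mod5[of j] by (intro CollectI exI[of _ "j mod 5"]) auto
qed (auto simp: signed_powers_def)

lemma cyc5_val_unit_coords: "c \<in> set unit_coords \<Longrightarrow> cyc5_val \<zeta> c \<in> signed_powers"
proof -
  have "cyc5_val \<zeta> ` set unit_coords =
      {\<zeta>^0, - (\<zeta>^0), \<zeta>^1, - (\<zeta>^1), \<zeta>^2, - (\<zeta>^2), \<zeta>^3, - (\<zeta>^3), \<zeta>^4, - (\<zeta>^4)}"
    by (simp add: unit_coords_def pow4 algebra_simps)
  then show "c \<in> set unit_coords \<Longrightarrow> cyc5_val \<zeta> c \<in> signed_powers"
    unfolding signed_powers_def by blast
qed

lemma cyc5_val_trace_coords: "t \<in> set trace_coords \<Longrightarrow> cyc5_val \<zeta> t \<in> {0, s, 1, s + 1, 2}"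
  by (auto simp: trace_coords_def s_def pow4)

lemma signed_powers_eq_powers: "c \<in> signed_powers \<Longrightarrow> \<exists>k. c = (- inverse \<zeta>)^k"
proof -
  have "(- inverse \<zeta>)^4 = (\<zeta>^4)^4" by (simp add: inverse_eq)
  also have "\<dots> = \<zeta>^(4 * 4)" by (rule power_mult[symmetric])
  also have "\<dots> = \<zeta>" by (subst power_mod5) simp
  finally have \<omega>4: "(- inverse \<zeta>)^4 = \<zeta>" .
  have "(- inverse \<zeta>)^5 = - ((\<zeta>^4)^5)" by (simp add: inverse_eq)
  also have "(\<zeta>^4)^5 = \<zeta>^(4 * 5)" by (rule power_mult[symmetric])
  also have "\<dots> = 1" by (subst power_mod5) simp
  finally have \<omega>5: "(- inverse \<zeta>)^5 = - 1" .
  assume "c \<in> signed_powers"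
  then obtain j where "c = \<zeta>^j \<or> c = - (\<zeta>^j)" by (auto simp: signed_powers_def)
  then show ?thesis
  proof
    assume "c = \<zeta>^j"
    then have "c = (- inverse \<zeta>)^(4 * j)" by (simp add: power_mult \<omega>4)
    then show ?thesis ..
  next
    assume "c = - (\<zeta>^j)"
    then have "c = (- inverse \<zeta>)^(4 * j + 5)" by (simp add: power_add power_mult \<omega>4 \<omega>5)
    then show ?thesis ..
  qed
qed

lemma Gq_at_mult_signed_power:
  assumes "c \<in> signed_powers" "A \<in> Gq_at \<zeta>"
  shows "mat c ** A \<in> Gq_at \<zeta>"
proof -
  obtain k where "c = (- inverse \<zeta>)^k" using signed_powers_eq_powers[OF assms(1)] ..
  then show ?thesis using Gq_at_mult_scalar_power[OF nonzero assms(2), of k] by simp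
qed

lemma trace_mult_signed_power:
  assumes c: "c \<in> signed_powers" and x: "x \<in> trace ` Gq_at \<zeta>"
  shows "c * x \<in> trace ` Gq_at \<zeta>"
proof -
  obtain A where A: "A \<in> Gq_at \<zeta>" and "x = trace A" using x ..
  then have "c * x = trace (mat c ** A)" by (simp add: trace_mat_mult)
  then show ?thesis using Gq_at_mult_signed_power[OF c A] by (rule image_eqI)
qed

lemma trace_Gq_at_subset: "trace ` Gq_at \<zeta> \<subseteq> trace_pattern s (s + 1) signed_powers"
proof
  fix x assume "x \<in> trace ` Gq_at \<zeta>"
  then obtain M where M: "M \<in> Gq" and x: "x = trace (eval_mat \<zeta> M)" by (auto simp: Gq_at_def)
  obtain c N where MN: "eval_mat \<zeta> M = mat (cyc5_val \<zeta> c) ** cyc5_mat_val \<zeta> N"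
      and c: "c \<in> set unit_coords" and N: "N \<in> set orbit_reps"
    using eval_mat_Gq_in_orbit_cover[OF M] by (rule orbit_coverE)
  have "x = cyc5_val \<zeta> (cyc5_mat_trace N) * cyc5_val \<zeta> c"
    by (simp add: x MN trace_mat_mult cyc5_mat_val_trace mult.commute del: cyc5_val.simps)
  moreover have "t * u \<in> trace_pattern s (s + 1) signed_powers"
    if "u \<in> signed_powers" "t \<in> {0, s, 1, s + 1, 2}" for t u
    using that by (auto simp: trace_pattern_def)
  ultimately show "x \<in> trace_pattern s (s + 1) signed_powers"
    using cyc5_val_unit_coords[OF c] cyc5_val_trace_coords[OF orbit_reps_trace[OF N]] by blast
qed

lemma traces_of_short_words: "{2, 0, 1, 1 + \<zeta>^2, 1 + \<zeta>} \<subseteq> trace ` Gq_at \<zeta>"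
proof -
  have tr: "trace (eval_mat \<zeta> M) \<in> trace ` Gq_at \<zeta>" if "M \<in> Gq" for M
    using that by (simp add: Gq_at_def)
  have words: "mat 1 \<in> Gq" "Sq \<in> Gq" "Rq ** Sq \<in> Gq" "Rq ** Rq \<in> Gq" "Rq \<in> Gq"
    using Gq.one Gq.mulS[OF Gq.one] Gq.mulS[OF Gq.mulR[OF Gq.one]] Gq.mulR[OF Gq.mulR[OF Gq.one]]
      Gq.mulR[OF Gq.one]
    by simp_all
  have "trace (eval_mat \<zeta> (mat 1)) = 2"
    by (simp add: eval_mat_generators nonzero trace_I)
  moreover have "trace (eval_mat \<zeta> Sq) = 0"
      "trace (eval_mat \<zeta> (Rq ** Sq)) = 1" "trace (eval_mat \<zeta> (Rq ** Rq)) = 1 + \<zeta>^2"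
      "trace (eval_mat \<zeta> Rq) = 1 + \<zeta>"
    unfolding eval_mat_mult[OF laurent_mat_generators(2,3) nonzero]
      eval_mat_mult[OF laurent_mat_generators(2,2) nonzero]
    by (simp_all add: eval_mat_generators nonzero trace_def sum_2 matrix_matrix_mult_def power2_eq_square)
  ultimately show ?thesis
    using tr[OF words(1)] tr[OF words(2)] tr[OF words(3)] tr[OF words(4)] tr[OF words(5)] by simp
qed

lemma trace_Gq_at_supset: "trace_pattern s (s + 1) signed_powers \<subseteq> trace ` Gq_at \<zeta>"
proof
  fix x assume "x \<in> trace_pattern s (s + 1) signed_powers"
  then obtain c where c: "c \<in> signed_powers" and x: "x \<in> {0, s * c, c, (s + 1) * c, 2 * c}"
    by (auto simp: trace_pattern_def)
  have "\<zeta>^4 \<in> signed_powers" "- (\<zeta>^2) \<in> signed_powers"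
    unfolding signed_powers_def by blast+
  then have c': "\<zeta>^4 * c \<in> signed_powers" "- (\<zeta>^2) * c \<in> signed_powers"
    using signed_powers_mult c by blast+
  have tr: "2 \<in> trace ` Gq_at \<zeta>" "0 \<in> trace ` Gq_at \<zeta>" "1 \<in> trace ` Gq_at \<zeta>"
      "1 + \<zeta>^2 \<in> trace ` Gq_at \<zeta>" "1 + \<zeta> \<in> trace ` Gq_at \<zeta>"
    using traces_of_short_words by simp_all
  have "\<zeta>^4 * \<zeta>^2 = \<zeta>"
    by (simp add: power_add[symmetric]) (subst power_mod5, simp)
  then have s: "s * c = (\<zeta>^4 * c) * (1 + \<zeta>^2)"
    by (simp add: s_def algebra_simps)
  have s1: "(s + 1) * c = (- (\<zeta>^2) * c) * (1 + \<zeta>)"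
    by (simp add: s_def pow4 algebra_simps power2_eq_square power3_eq_cube)
  from x consider "x = 0" | "x = s * c" | "x = c" | "x = (s + 1) * c" | "x = 2 * c" by blast
  then show "x \<in> trace ` Gq_at \<zeta>"
  proof cases
    case 1 then show ?thesis using tr(2) by simp
  next
    case 2 then show ?thesis using trace_mult_signed_power[OF c'(1) tr(4)] s by simp
  next
    case 3 then show ?thesis using trace_mult_signed_power[OF c tr(3)] by simp
  next
    case 4 then show ?thesis using trace_mult_signed_power[OF c'(2) tr(5)] s1 by simp
  next
    case 5 then show ?thesis using trace_mult_signed_power[OF c tr(1)] by (simp add: mult.commute)
  qed
qed

lemma trace_Gq_at_eq: "trace ` Gq_at \<zeta> = trace_pattern s (s + 1) signed_powers"
  using trace_Gq_at_subset trace_Gq_at_supset by blast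

lemma trace_Gq_at_eq_sqrt5:
  "trace ` Gq_at \<zeta> = trace_pattern ((of_real (sqrt 5) - 1) / 2) ((of_real (sqrt 5) + 1) / 2) signed_powers"
  using s_cases
proof
  assume s: "s = (of_real (sqrt 5) - 1) / 2"
  have "s + 1 = (of_real (sqrt 5) + 1) / 2" unfolding s by (simp add: field_simps)
  then show ?thesis by (simp only: trace_Gq_at_eq s)
next
  assume s: "s = - (of_real (sqrt 5) + 1) / 2"
  have "- (s + 1) = (of_real (sqrt 5) - 1) / 2" "- s = (of_real (sqrt 5) + 1) / 2"
    unfolding s by (simp_all add: field_simps)
  then show ?thesis
    by (simp only: trace_Gq_at_eq trace_pattern_swap[of signed_powers s "s + 1", OF signed_powers_uminus])
qed

lemma five_dvd_eval_1_iff_eval_eq_0: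
  assumes M: "M \<in> Gq"
  shows "(\<exists>m::int. laurent_eval 1 (trace M) = of_int (5 * m)) \<longleftrightarrow> laurent_eval \<zeta> (trace M) = 0"
proof -
  let ?f = "trace M"
  have f: "laurent_poly ?f" and ev: "laurent_eval \<zeta> ?f = trace (eval_mat \<zeta> M)"
    using laurent_mat_Gq[OF M] by (simp_all add: laurent_poly_trace laurent_eval_trace)
  obtain c N where MN: "eval_mat \<zeta> M = mat (cyc5_val \<zeta> c) ** cyc5_mat_val \<zeta> N"
      and c: "c \<in> set unit_coords" and N: "N \<in> set orbit_reps"
    using eval_mat_Gq_in_orbit_cover[OF M] by (rule orbit_coverE)
  define t where "t = cyc5_mat_trace N"
  have t: "t \<in> set trace_coords" using orbit_reps_trace[OF N] by (simp add: t_def)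
  have "cyc5_val \<zeta> (residue_coords ?f) = cyc5_val \<zeta> (cyc5_mul c t)"
    by (simp add: laurent_eval_eq_cyc5_val[OF f, symmetric] ev MN trace_mat_mult cyc5_mat_val_trace
        cyc5_val_mul t_def del: cyc5_val.simps)
  then have coords: "residue_coords ?f = cyc5_mul c t" by (simp only: cyc5_val_inj)
  have "(\<exists>m::int. laurent_eval 1 ?f = of_int (5 * m)) \<longleftrightarrow> 5 dvd (\<Sum>r<5. residue_coeff_sum ?f r)"
    by (simp only: laurent_eval_1_eq_residue_coeff_sums[OF f] of_int_eq_iff dvd_def)
  also have "\<dots> \<longleftrightarrow> 5 dvd cyc5_coeff_sum (cyc5_mul c t)"
    by (simp add: residue_coeff_sums_eq_coeff_sum_coords coords dvd_add_left_iff)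
  also have "\<dots> \<longleftrightarrow> t = (0, 0, 0, 0)"
    by (rule trace_coords_coeff_sum_mod5[OF c t])
  also have "\<dots> \<longleftrightarrow> cyc5_mul c t = (0, 0, 0, 0)"
    using trace_coords_coeff_sum_mod5[OF c t] by (cases c) auto
  also have "\<dots> \<longleftrightarrow> laurent_eval \<zeta> ?f = 0"
    by (simp add: laurent_eval_eq_cyc5_val[OF f] coords cyc5_val_eq_0_iff del: cyc5_val.simps)
  finally show ?thesis .
qed

end

lemma cyclotomic5_if_primitive:
  assumes "z^5 = 1" "z \<noteq> 1"
  shows "cyclotomic5 z"
proof
  have "(z - 1) * (z^4 + z^3 + z^2 + z + 1) = z^5 - 1"
    by (simp add: algebra_simps eval_nat_numeral)
  then show "z^4 + z^3 + z^2 + z + 1 = 0" using assms by simp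
qed

theorem corollary3p7:
  fixes \<zeta> :: complex
  assumes prim: "\<zeta> ^ 5 = 1" "\<forall>k::nat. 0 < k \<and> k < 5 \<longrightarrow> \<zeta> ^ k \<noteq> 1"
  shows "(trace ` Gq_at \<zeta> =
           {x. \<exists>c j. (c = \<zeta> ^ j \<or> c = - (\<zeta> ^ j)) \<and> j < (5::nat) \<and>
                 x \<in> {0, (of_real (sqrt 5) - 1) / 2 * c, c, (of_real (sqrt 5) + 1) / 2 * c, 2 * c}}) \<and>
         (\<forall>M \<in> Gq. let f = trace M in
           ((\<exists>m::int. laurent_eval 1 f = of_int (5 * m)) \<longleftrightarrow> laurent_eval \<zeta> f = 0) \<and>
           (laurent_eval \<zeta> f = 0 \<longleftrightarrow> laurent_dvd qint5 f))"
proof -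
  interpret cyclotomic5 \<zeta>
    using cyclotomic5_if_primitive prim by force
  have "trace ` Gq_at \<zeta> =
      {x. \<exists>c j. (c = \<zeta> ^ j \<or> c = - (\<zeta> ^ j)) \<and> j < 5 \<and>
        x \<in> {0, (of_real (sqrt 5) - 1) / 2 * c, c, (of_real (sqrt 5) + 1) / 2 * c, 2 * c}}"
    unfolding trace_Gq_at_eq_sqrt5 trace_pattern_def signed_powers_bounded by blast
  moreover have "laurent_eval \<zeta> (trace M) = 0 \<longleftrightarrow> laurent_dvd qint5 (trace M)" if "M \<in> Gq" for M
    using that by (simp add: laurent_eval_eq_0_iff_qint5_dvd laurent_poly_trace laurent_mat_Gq)
  ultimately show ?thesis
    using five_dvd_eval_1_iff_eval_eq_0 by (simp add: Let_def)
qed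

end
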